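(* Let $\lambda>0$, $c>0$, $0<p<1$, and let $\big(X(t),Y(t)\big)$ be the planar orthogonal random motion described in the context. Then for all $t>0$, $$\mathbb{P}\big(X(t)+Y(t)=ct\big)=\frac{1}{2}\,e^{-\lambda t(1-p)}.$$
   Context: Directions: $d_j=\big(\cos(\pi j/2),\sin(\pi j/2)\big)$, $j=0,1,2,3$, indices mod 4. Let $N(t)$ be a homogeneous Poisson process of rate $\lambda$. The direction process $D(t)$ has $D(0)$ uniform on the four directions and changes only at Poisson event times: from a horizontal direction ($d_0,d_2$) it turns counterclockwise ($d_j\to d_{j+1}$) with probability $p$ and clockwise ($d_j\to d_{j-1}$) with probability $1-p$; from a vertical direction ($d_1,d_3$) it turns counterclockwise with probability $1-p$ and clockwise with probability $p$ (independent choices). The position is $\big(X(t),Y(t)\big)=c\int_0^t D(\tau)\,d\tau$ starting from the origin. *)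

theory Defs
  imports "HOL-Probability.Probability"
begin

definition dirvec :: "nat \<Rightarrow> real \<times> real" where
  "dirvec j = (cos (pi * real (j mod 4) / 2), sin (pi * real (j mod 4) / 2))"

definition event_time :: "(nat \<Rightarrow> real) \<Rightarrow> nat \<Rightarrow> real" where
  "event_time \<tau> n = (\<Sum>k<n. \<tau> k)"

definition count_proc :: "(nat \<Rightarrow> real) \<Rightarrow> real \<Rightarrow> nat" where
  "count_proc \<tau> t = card {n. 1 \<le> n \<and> event_time \<tau> n \<le> t}"

text \<open>Coin b k = True has probability p:
  from a horizontal direction (even index) it means a counterclockwise turn,
  from a vertical direction (odd index) it means a clockwise turn.\<close>
fun dir_index :: "nat \<Rightarrow> (nat \<Rightarrow> bool) \<Rightarrow> nat \<Rightarrow> nat" where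
  "dir_index j0 b 0 = j0 mod 4"
| "dir_index j0 b (Suc k) =
     (let j = dir_index j0 b k in
      if even j then (if b k then (j + 1) mod 4 else (j + 3) mod 4)
      else (if b k then (j + 3) mod 4 else (j + 1) mod 4))"

definition dir_proc :: "nat \<Rightarrow> (nat \<Rightarrow> real) \<Rightarrow> (nat \<Rightarrow> bool) \<Rightarrow> real \<Rightarrow> real \<times> real" where
  "dir_proc j0 \<tau> b t = dirvec (dir_index j0 b (count_proc \<tau> t))"

definition position :: "real \<Rightarrow> nat \<Rightarrow> (nat \<Rightarrow> real) \<Rightarrow> (nat \<Rightarrow> bool) \<Rightarrow> real \<Rightarrow> real \<times> real" where
  "position c j0 \<tau> b t = c *\<^sub>R integral {0..t} (\<lambda>s. dir_proc j0 \<tau> b s)"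

definition input_law :: "real \<Rightarrow> real \<Rightarrow> (nat \<times> (nat \<Rightarrow> real \<times> bool)) measure" where
  "input_law lam p =
     measure_pmf (pmf_of_set {0..<4}) \<Otimes>\<^sub>M
     (\<Pi>\<^sub>M k\<in>UNIV. density lborel (exponential_density lam) \<Otimes>\<^sub>M measure_pmf (bernoulli_pmf p))"

definition input_space :: "(nat \<times> (nat \<Rightarrow> real \<times> bool)) measure" where
  "input_space = count_space UNIV \<Otimes>\<^sub>M (\<Pi>\<^sub>M k\<in>UNIV. borel \<Otimes>\<^sub>M count_space UNIV)"

end

theory Submission
  imports Defs
begin

(* Since fst (d_j) + snd (d_j) is 1 for j = 0, 1 and -1 for j = 2, 3, X(t) + Y(t) = ct holds
   exactly when the direction stays in {d_0, d_1} on [0, t).  From d_0 a turn of probability p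
   leads to d_1 and from d_1 a turn of probability p leads back to d_0, while the other turn
   leaves {d_0, d_1} for good.  So the event is: D(0) is d_0 or d_1 (probability 1/2) and all
   turns before t are of the probability-p kind.  Summing over the number n of turns,
   sum_n e^(-lam t) (lam t)^n / n! * p^n = e^(-lam t (1 - p)). *)

(* The probability of exactly n arrivals in the half-open interval [0, t); it vanishes for
   t <= 0, including t = 0. *)
definition poisson_prob :: "real \<Rightarrow> nat \<Rightarrow> real \<Rightarrow> real" where
  "poisson_prob lam n t = (if 0 < t then exp (- lam * t) * (lam * t) ^ n / fact n else 0)"

lemma poisson_prob_nonneg: "0 \<le> lam \<Longrightarrow> 0 \<le> poisson_prob lam n t"
  by (simp add: poisson_prob_def)

lemma borel_measurable_poisson_prob [measurable]: "poisson_prob lam n \<in> borel_measurable borel"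
  unfolding poisson_prob_def by measurable

lemma has_integral_power_diff:
  fixes t :: real
  assumes "0 \<le> t"
  shows "((\<lambda>x. (t - x) ^ n) has_integral t ^ Suc n / real (Suc n)) {0..t}"
proof -
  let ?G = "\<lambda>x::real. - ((t - x) ^ Suc n) / real (Suc n)"
  have "((\<lambda>x. (t - x) ^ n) has_integral ?G t - ?G 0) {0..t}"
  proof (rule fundamental_theorem_of_calculus[OF assms])
    fix x :: real
    have "(?G has_real_derivative (t - x) ^ n) (at x within {0..t})"
      by (auto intro!: derivative_eq_intros simp del: power_Suc of_nat_Suc)
    then show "(?G has_vector_derivative (t - x) ^ n) (at x within {0..t})"
      by (simp add: has_real_derivative_iff_has_vector_derivative)
  qed
  then show ?thesis by simp
qed

lemma poisson_prob_Suc_convolution: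
  assumes lam: "0 < lam"
  shows "((\<lambda>x. exponential_density lam x * poisson_prob lam n (t - x))
           has_integral poisson_prob lam (Suc n) t) UNIV"
proof (cases "0 < t")
  case False
  then have "(\<lambda>x. exponential_density lam x * poisson_prob lam n (t - x)) = (\<lambda>x. 0)"
    by (auto simp: fun_eq_iff poisson_prob_def exponential_density_def)
  then show ?thesis using False by (simp add: poisson_prob_def)
next
  case True
  define C where "C = lam ^ Suc n * exp (- lam * t) / fact n"
  have integrand: "exponential_density lam x * poisson_prob lam n (t - x)
      = (if x \<in> {0..t} then C * (t - x) ^ n else 0)" if "x \<noteq> t" for x
  proof (cases "x \<in> {0..<t}")
    case True
    have "exp (- x * lam) * exp (- lam * (t - x)) = exp (- lam * t)"
      by (simp add: exp_add[symmetric] algebra_simps)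
    then have "exponential_density lam x * poisson_prob lam n (t - x)
        = lam * lam ^ n * exp (- lam * t) * (t - x) ^ n / fact n"
      using True by (simp add: exponential_density_def poisson_prob_def power_mult_distrib)
    with True show ?thesis by (simp add: C_def)
  next
    case False
    with that show ?thesis by (auto simp: exponential_density_def poisson_prob_def)
  qed
  have "C * (t ^ Suc n / real (Suc n)) = poisson_prob lam (Suc n) t"
    using True by (simp add: C_def poisson_prob_def power_mult_distrib field_simps)
  then have "((\<lambda>x. if x \<in> {0..t} then C * (t - x) ^ n else 0)
      has_integral poisson_prob lam (Suc n) t) UNIV"
    using has_integral_mult_right[OF has_integral_power_diff[of t n], of C] True
    by (subst has_integral_restrict_UNIV) simp
  then show ?thesis
    by (rule has_integral_spike_finite[where S = "{t}", rotated 2]) (simp_all add: integrand)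
qed

lemma sums_poisson_prob:
  assumes "0 < t"
  shows "(\<lambda>n. r ^ n * poisson_prob lam n t) sums exp (- lam * t * (1 - r))"
proof -
  have "(\<lambda>n. exp (- lam * t) * ((r * lam * t) ^ n /\<^sub>R fact n))
      sums (exp (- lam * t) * exp (r * lam * t))"
    by (intro sums_mult exp_converges)
  moreover have "exp (- lam * t) * exp (r * lam * t) = exp (- lam * t * (1 - r))"
    by (simp add: exp_add[symmetric] algebra_simps)
  ultimately show ?thesis
    using assms by (simp add: poisson_prob_def power_mult_distrib divide_inverse_commute mult_ac)
qed

lemma emeasure_exponential_density_atLeast:
  assumes lam: "0 < lam" and t: "0 \<le> t"
  shows "emeasure (density lborel (exponential_density lam)) {t..} = ennreal (exp (- lam * t))"
proof -
  let ?E = "density lborel (exponential_density lam)"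
  interpret E: prob_space ?E by (rule prob_space_exponential_density[OF lam])
  have "emeasure ?E {t} = 0"
  proof -
    have "AE x in lborel. ennreal (exponential_density lam x) * indicator {t} x = 0"
      using AE_lborel_singleton[of t] by eventually_elim auto
    then show ?thesis
      by (subst emeasure_density) (auto simp: nn_integral_0_iff_AE)
  qed
  then have "emeasure ?E {t..} = emeasure ?E ({t..} - {t})"
    by (intro emeasure_Diff_null_set[symmetric]) (auto simp: null_sets_def)
  also have "{t..} - {t} = space ?E - {..t}"
    by auto
  also have "emeasure ?E (space ?E - {..t}) = emeasure ?E (space ?E) - emeasure ?E {..t}"
    by (rule emeasure_compl) (auto simp: E.emeasure_finite)
  also have "\<dots> = 1 - ennreal (1 - exp (- lam * t))"
    using t E.emeasure_space_1 by (simp add: emeasure_erlang_density[OF lam] erlang_CDF_0)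
  also have "\<dots> = ennreal (exp (- lam * t))"
    using t lam by (subst ennreal_1[symmetric], subst ennreal_minus) auto
  finally show ?thesis .
qed

lemma (in sequence_space) emeasure_S_case_nat:
  assumes A: "A \<in> sets S"
  shows "emeasure S A = (\<integral>\<^sup>+ y. emeasure S {w \<in> space S. case_nat y w \<in> A} \<partial>M)"
proof -
  have m: "(\<lambda>(y, w). case_nat y w) \<in> measurable (M \<Otimes>\<^sub>M S) S"
    by (auto simp: split_beta')
  have "emeasure S A = emeasure (distr (M \<Otimes>\<^sub>M S) S (\<lambda>(y, w). case_nat y w)) A"
    by (simp add: PiM_iter)
  also have "\<dots> = emeasure (M \<Otimes>\<^sub>M S) ((\<lambda>(y, w). case_nat y w) -` A \<inter> space (M \<Otimes>\<^sub>M S))"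
    by (rule emeasure_distr[OF m A])
  also have "\<dots> = (\<integral>\<^sup>+ y. emeasure S
      (Pair y -` ((\<lambda>(y, w). case_nat y w) -` A \<inter> space (M \<Otimes>\<^sub>M S))) \<partial>M)"
    by (rule P.emeasure_pair_measure_alt) (rule measurable_sets[OF m A])
  also have "\<dots> = (\<integral>\<^sup>+ y. emeasure S {w \<in> space S. case_nat y w \<in> A} \<partial>M)"
    by (intro nn_integral_cong arg_cong2[where f = emeasure]) (auto simp: space_pair_measure)
  finally show ?thesis .
qed

(* w k is the pair (k-th interarrival time, k-th mark).  The nonnegativity of the first n + 1
   interarrival times makes these sets disjoint in n for every w, not just almost surely. *)
definition marked_arrivals :: "('b \<Rightarrow> bool) \<Rightarrow> nat \<Rightarrow> real \<Rightarrow> (nat \<Rightarrow> real \<times> 'b) set" where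
  "marked_arrivals P n t =
     {w. (\<forall>k\<le>n. 0 \<le> fst (w k)) \<and>
         event_time (\<lambda>k. fst (w k)) n < t \<and> t \<le> event_time (\<lambda>k. fst (w k)) (Suc n) \<and>
         (\<forall>k<n. P (snd (w k)))}"

lemma event_time_case_nat_Suc:
  "event_time (\<lambda>k. fst (case_nat y w k)) (Suc n) = fst y + event_time (\<lambda>k. fst (w k)) n"
  unfolding event_time_def by (subst sum.lessThan_Suc_shift) simp

lemma case_nat_in_marked_arrivals_0:
  "case_nat y w \<in> marked_arrivals P 0 t \<longleftrightarrow> 0 < t \<and> t \<le> fst y"
  by (auto simp: marked_arrivals_def event_time_def)

lemma case_nat_in_marked_arrivals_Suc:
  "case_nat y w \<in> marked_arrivals P (Suc n) t \<longleftrightarrow>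
     0 \<le> fst y \<and> P (snd y) \<and> w \<in> marked_arrivals P n (t - fst y)"
proof -
  have all_le_Suc: "(\<forall>k\<le>Suc n. Q k) \<longleftrightarrow> Q 0 \<and> (\<forall>k\<le>n. Q (Suc k))" for Q
    by (metis Suc_le_mono le0 not0_implies_Suc)
  show ?thesis
    by (auto simp: marked_arrivals_def all_le_Suc event_time_case_nat_Suc less_Suc_eq_0_disj
        algebra_simps)
qed

lemma marked_arrivals_unique:
  assumes "w \<in> marked_arrivals P n t" "w \<in> marked_arrivals R m t"
  shows "n = m"
proof (rule ccontr)
  assume "n \<noteq> m"
  then consider "n < m" | "m < n" by linarith
  then show False
  proof cases
    case 1
    then have "event_time (\<lambda>k. fst (w k)) (Suc n) \<le> event_time (\<lambda>k. fst (w k)) m"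
      using assms(2) unfolding event_time_def marked_arrivals_def by (intro sum_mono2) auto
    with assms show False by (auto simp: marked_arrivals_def)
  next
    case 2
    then have "event_time (\<lambda>k. fst (w k)) (Suc m) \<le> event_time (\<lambda>k. fst (w k)) n"
      using assms(1) unfolding event_time_def marked_arrivals_def by (intro sum_mono2) auto
    with assms show False by (auto simp: marked_arrivals_def)
  qed
qed

locale marked_poisson_process =
  fixes lam :: real and Q :: "'b pmf"
  assumes lam_pos: "0 < lam"
begin

abbreviation interarrival :: "real measure" where
  "interarrival \<equiv> density lborel (exponential_density lam)"

abbreviation interarrival_mark :: "(real \<times> 'b) measure" where
  "interarrival_mark \<equiv> interarrival \<Otimes>\<^sub>M measure_pmf Q"

lemma prob_space_interarrival_mark: "prob_space interarrival_mark"
  by (intro prob_space_pair prob_space_exponential_density[OF lam_pos] prob_space_measure_pmf)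

sublocale arrivals: sequence_space interarrival_mark
  by (simp add: sequence_space_def product_prob_space_def product_prob_space_axioms_def
      product_sigma_finite_def prob_space_interarrival_mark prob_space_imp_sigma_finite)

lemma sets_interarrival_mark [simp]:
  "sets interarrival_mark = sets (borel \<Otimes>\<^sub>M count_space UNIV)"
  by (intro sets_pair_measure_cong) auto

lemma space_arrivals [simp]: "space arrivals.S = UNIV"
  by (auto simp: space_PiM space_pair_measure)

lemma measurable_interarrival [measurable]: "(\<lambda>w. fst (w k)) \<in> borel_measurable arrivals.S"
  by (rule measurable_compose[OF measurable_component_singleton[of k]])
    (simp_all add: measurable_cong_sets[OF sets_interarrival_mark refl])

lemma measurable_mark_pred: "Measurable.pred interarrival_mark (\<lambda>y. P (snd y))"
  by (rule measurable_compose[OF measurable_snd]) simp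

lemma measurable_mark [measurable]: "Measurable.pred arrivals.S (\<lambda>w. P (snd (w k)))"
  by (rule measurable_compose[OF measurable_component_singleton[of k] measurable_mark_pred]) simp

lemma measurable_event_time [measurable]:
  "(\<lambda>w. event_time (\<lambda>k. fst (w k)) n) \<in> borel_measurable arrivals.S"
  unfolding event_time_def by measurable

lemma marked_arrivals_sets [measurable]: "marked_arrivals P n t \<in> sets arrivals.S"
proof -
  have "marked_arrivals P n t =
      {w \<in> space arrivals.S. (\<forall>k\<le>n. 0 \<le> fst (w k)) \<and>
         event_time (\<lambda>k. fst (w k)) n < t \<and> t \<le> event_time (\<lambda>k. fst (w k)) (Suc n) \<and>
         (\<forall>k<n. P (snd (w k)))}"
    by (auto simp: marked_arrivals_def)
  also have "\<dots> \<in> sets arrivals.S"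
    by measurable
  finally show ?thesis .
qed

lemma emeasure_arrivals_case_nat:
  "A \<in> sets arrivals.S
     \<Longrightarrow> emeasure arrivals.S A = (\<integral>\<^sup>+ y. emeasure arrivals.S {w. case_nat y w \<in> A} \<partial>interarrival_mark)"
  using arrivals.emeasure_S_case_nat by simp

lemma emeasure_interarrival_mark_Times:
  "A \<in> sets borel \<Longrightarrow> emeasure interarrival_mark (A \<times> UNIV) = emeasure interarrival A"
  by (subst measure_pmf.emeasure_pair_measure_Times) (auto simp: measure_pmf.emeasure_space_1)

lemma AE_interarrival_pos: "AE w in arrivals.S. \<forall>k. 0 < fst (w k)"
proof -
  have "emeasure interarrival_mark ({..0} \<times> UNIV) = 0"
    by (simp add: emeasure_interarrival_mark_Times emeasure_erlang_density[OF lam_pos] erlang_CDF_at0)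
  then have "AE y in interarrival_mark. 0 < fst y"
    by (intro AE_I'[where N = "{..0} \<times> UNIV"]) (auto intro: null_setsI)
  then show ?thesis
    by (subst AE_all_countable) (auto intro!: arrivals.AE_component)
qed

lemma nn_integral_interarrival_mark:
  assumes g: "g \<in> borel_measurable borel" "\<And>x. 0 \<le> g x"
  shows "(\<integral>\<^sup>+ y. ennreal (g (fst y)) * indicator {y. P (snd y)} y \<partial>interarrival_mark)
       = (\<integral>\<^sup>+ x. ennreal (exponential_density lam x * (measure_pmf.prob Q {b. P b} * g x)) \<partial>lborel)"
proof -
  have "(\<integral>\<^sup>+ y. ennreal (g (fst y)) * indicator {y. P (snd y)} y \<partial>interarrival_mark)
      = (\<integral>\<^sup>+ x. \<integral>\<^sup>+ b. ennreal (g (fst (x, b))) * indicator {y. P (snd y)} (x, b)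
           \<partial>Q \<partial>interarrival)"
  proof (rule measure_pmf.nn_integral_fst[symmetric])
    have "{y \<in> space interarrival_mark. P (snd y)} \<in> sets interarrival_mark"
      using measurable_mark_pred by (rule predE)
    then show "(\<lambda>y. ennreal (g (fst y)) * indicator {y. P (snd y)} y) \<in> borel_measurable interarrival_mark"
      using g(1) by (simp add: space_pair_measure)
  qed
  also have "\<dots> = (\<integral>\<^sup>+ x. ennreal (measure_pmf.prob Q {b. P b} * g x) \<partial>interarrival)"
  proof (intro nn_integral_cong)
    fix x
    have "(\<integral>\<^sup>+ b. ennreal (g (fst (x, b))) * indicator {y. P (snd y)} (x, b) \<partial>Q)
        = (\<integral>\<^sup>+ b. ennreal (g x) * indicator {b. P b} b \<partial>Q)"
      by (intro nn_integral_cong) (simp add: indicator_def)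
    then show "(\<integral>\<^sup>+ b. ennreal (g (fst (x, b))) * indicator {y. P (snd y)} (x, b) \<partial>Q)
        = ennreal (measure_pmf.prob Q {b. P b} * g x)"
      using g(2) by (simp add: nn_integral_cmult_indicator measure_pmf.emeasure_eq_measure
          ennreal_mult' mult.commute)
  qed
  also have "\<dots> = (\<integral>\<^sup>+ x. ennreal (exponential_density lam x * (measure_pmf.prob Q {b. P b} * g x)) \<partial>lborel)"
    using g lam_pos
    by (subst nn_integral_density) (auto intro!: nn_integral_cong simp: ennreal_mult'[symmetric])
  finally show ?thesis .
qed

lemma emeasure_marked_arrivals_0:
  "emeasure arrivals.S (marked_arrivals P 0 t) = ennreal (poisson_prob lam 0 t)"
proof (cases "0 < t")
  case True
  have "{w. case_nat y w \<in> marked_arrivals P 0 t} = (if t \<le> fst y then UNIV else {})" for y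
    using True by (auto simp: case_nat_in_marked_arrivals_0)
  then have "emeasure arrivals.S {w. case_nat y w \<in> marked_arrivals P 0 t} = indicator ({t..} \<times> UNIV) y"
    for y
    using arrivals.P.emeasure_space_1 by (cases y) simp
  then have "emeasure arrivals.S (marked_arrivals P 0 t) = emeasure interarrival_mark ({t..} \<times> UNIV)"
    by (simp add: emeasure_arrivals_case_nat)
  also have "\<dots> = ennreal (poisson_prob lam 0 t)"
    using True by (simp add: emeasure_interarrival_mark_Times emeasure_exponential_density_atLeast[OF lam_pos]
        poisson_prob_def)
  finally show ?thesis .
next
  case False
  then have "marked_arrivals P 0 t = {}"
    by (auto simp: marked_arrivals_def event_time_def)
  with False show ?thesis
    by (simp add: poisson_prob_def)
qed

lemma emeasure_marked_arrivals_Suc: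
  fixes P :: "'b \<Rightarrow> bool"
  defines "q \<equiv> measure_pmf.prob Q {b. P b}"
  assumes IH: "\<And>t. emeasure arrivals.S (marked_arrivals P n t) = ennreal (q ^ n * poisson_prob lam n t)"
  shows "emeasure arrivals.S (marked_arrivals P (Suc n) t) = ennreal (q ^ Suc n * poisson_prob lam (Suc n) t)"
proof -
  define g where "g x = (if 0 \<le> x then q ^ n * poisson_prob lam n (t - x) else 0)" for x
  have g_nonneg: "0 \<le> g x" for x
    using lam_pos by (simp add: g_def q_def poisson_prob_nonneg)
  have "{w. case_nat y w \<in> marked_arrivals P (Suc n) t}
      = (if 0 \<le> fst y \<and> P (snd y) then marked_arrivals P n (t - fst y) else {})" for y
    by (auto simp: case_nat_in_marked_arrivals_Suc)
  then have "emeasure arrivals.S {w. case_nat y w \<in> marked_arrivals P (Suc n) t}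
      = ennreal (g (fst y)) * indicator {y. P (snd y)} y" for y
    by (simp add: IH g_def split: split_indicator)
  then have "emeasure arrivals.S (marked_arrivals P (Suc n) t)
      = (\<integral>\<^sup>+ y. ennreal (g (fst y)) * indicator {y. P (snd y)} y \<partial>interarrival_mark)"
    by (simp add: emeasure_arrivals_case_nat)
  also have "\<dots> = (\<integral>\<^sup>+ x. ennreal (exponential_density lam x * (q * g x)) \<partial>lborel)"
    unfolding q_def by (rule nn_integral_interarrival_mark) (simp_all add: g_def g_nonneg[unfolded g_def])
  also have "\<dots> = ennreal (q ^ Suc n * poisson_prob lam (Suc n) t)"
  proof (rule nn_integral_has_integral_lborel)
    have "(\<lambda>x. exponential_density lam x * (q * g x))
        = (\<lambda>x. q ^ Suc n * (exponential_density lam x * poisson_prob lam n (t - x)))"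
      by (simp add: fun_eq_iff exponential_density_def g_def)
    then show "((\<lambda>x. exponential_density lam x * (q * g x)) has_integral
        q ^ Suc n * poisson_prob lam (Suc n) t) UNIV"
      using has_integral_mult_right[OF poisson_prob_Suc_convolution[OF lam_pos]] by simp
    show "0 \<le> exponential_density lam x * (q * g x)" for x
      using lam_pos g_nonneg by (simp add: q_def exponential_density_nonneg)
  qed (simp add: g_def)
  finally show ?thesis .
qed

lemma emeasure_marked_arrivals:
  "emeasure arrivals.S (marked_arrivals P n t)
     = ennreal (measure_pmf.prob Q {b. P b} ^ n * poisson_prob lam n t)"
proof (induction n arbitrary: t)
  case 0
  show ?case by (simp add: emeasure_marked_arrivals_0)
next
  case (Suc n)
  then show ?case by (rule emeasure_marked_arrivals_Suc)
qed

lemma emeasure_UN_marked_arrivals: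
  assumes "0 < t"
  shows "emeasure arrivals.S (\<Union>n. marked_arrivals P n t)
       = ennreal (exp (- lam * t * (1 - measure_pmf.prob Q {b. P b})))"
proof -
  let ?q = "measure_pmf.prob Q {b. P b}"
  have "emeasure arrivals.S (\<Union>n. marked_arrivals P n t)
      = (\<Sum>n. emeasure arrivals.S (marked_arrivals P n t))"
    by (rule suminf_emeasure[symmetric])
      (auto simp: disjoint_family_on_def dest: marked_arrivals_unique)
  also have "\<dots> = (\<Sum>n. ennreal (?q ^ n * poisson_prob lam n t))"
    by (simp add: emeasure_marked_arrivals)
  also have "\<dots> = ennreal (exp (- lam * t * (1 - ?q)))"
    using sums_poisson_prob[OF assms, of ?q lam] lam_pos
    by (intro suminf_ennreal_eq) (simp_all add: poisson_prob_nonneg)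
  finally show ?thesis .
qed

lemma AE_marked_arrivals_True:
  assumes "0 < t"
  shows "AE w in arrivals.S. \<exists>n. w \<in> marked_arrivals (\<lambda>_. True) n t"
proof -
  have UN_sets: "(\<Union>n. marked_arrivals (\<lambda>_. True) n t) \<in> sets arrivals.S"
    by measurable
  have "emeasure arrivals.S (\<Union>n. marked_arrivals (\<lambda>_. True) n t) = 1"
    using emeasure_UN_marked_arrivals[OF assms, of "\<lambda>_. True"] by simp
  then have "AE w in arrivals.S. w \<in> (\<Union>n. marked_arrivals (\<lambda>_. True) n t)"
    unfolding arrivals.P.AE_in_set_eq_1[OF UN_sets] by (simp add: arrivals.P.emeasure_eq_measure)
  then show ?thesis
    by auto
qed

end

lemma dirvec_fst_plus_snd: "fst (dirvec i) + snd (dirvec i) = (if i mod 4 < 2 then 1 else -1)"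
proof -
  have "i mod 4 \<in> {0, 1, 2, 3}" by auto
  moreover have "cos (3 * pi / 2) = 0" "sin (3 * pi / 2) = -1"
    using cos_periodic_pi[of "pi / 2"] sin_periodic_pi[of "pi / 2"] by (simp_all add: add_divide_distrib)
  ultimately show ?thesis
    by (auto simp: dirvec_def mult.commute)
qed

lemma dir_index_less_4: "dir_index j b k < 4"
  by (cases k) (auto simp: Let_def)

lemma dir_index_less_2_iff: "(\<forall>m\<le>N. dir_index j b m < 2) \<longleftrightarrow> j mod 4 < 2 \<and> (\<forall>k<N. b k)"
proof (induction N)
  case (Suc N)
  have step: "dir_index j b (Suc N) < 2 \<longleftrightarrow> b N" if "dir_index j b N < 2"
  proof -
    from that have "dir_index j b N = 0 \<or> dir_index j b N = 1" by linarith
    then show ?thesis by (auto simp: Let_def)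
  qed
  have "(\<forall>m\<le>Suc N. dir_index j b m < 2) \<longleftrightarrow> (\<forall>m\<le>N. dir_index j b m < 2) \<and> dir_index j b (Suc N) < 2"
    by (auto simp: le_Suc_eq)
  with Suc.IH step show ?case by (auto simp: less_Suc_eq)
qed simp

lemma measurable_dir_index [measurable]:
  assumes [measurable]: "J \<in> measurable M (count_space UNIV)"
    and [measurable]: "\<And>k. (\<lambda>x. B x k) \<in> measurable M (count_space UNIV)"
  shows "(\<lambda>x. dir_index (J x) (B x) n) \<in> measurable M (count_space UNIV)"
proof (induction n)
  case (Suc n)
  note Suc.IH [measurable]
  show ?case by (simp add: Let_def) measurable
qed simp

lemma space_input_space: "space input_space = UNIV"
  by (auto simp: input_space_def space_pair_measure space_PiM)

lemma measurable_dir_proc: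
  "(\<lambda>(x, s). dir_proc (fst x) (\<lambda>k. fst (snd x k)) (\<lambda>k. snd (snd x k)) s)
     \<in> borel_measurable (input_space \<Otimes>\<^sub>M lborel)"
proof -
  let ?X = "input_space \<Otimes>\<^sub>M lborel"
  have [measurable]: "(\<lambda>y. fst (fst y)) \<in> measurable ?X (count_space UNIV)"
    unfolding input_space_def by measurable
  have [measurable]: "(\<lambda>y. fst (snd (fst y) k)) \<in> borel_measurable ?X" for k
    unfolding input_space_def by measurable
  have [measurable]: "(\<lambda>y. snd (snd (fst y) k)) \<in> measurable ?X (count_space UNIV)" for k
    unfolding input_space_def by measurable
  have count: "(\<lambda>y. count_proc (\<lambda>k. fst (snd (fst y) k)) (snd y)) \<in> measurable ?X (count_space UNIV)"
    unfolding count_proc_def event_time_def by measurable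
  have index: "(\<lambda>y. dir_index (fst (fst y)) (\<lambda>k. snd (snd (fst y) k)) n) \<in> measurable ?X (count_space UNIV)"
    for n by measurable
  have "(\<lambda>y. dir_index (fst (fst y)) (\<lambda>k. snd (snd (fst y) k))
      (count_proc (\<lambda>k. fst (snd (fst y) k)) (snd y))) \<in> measurable ?X (count_space UNIV)"
    by (rule measurable_compose_countable[OF index count])
  then show ?thesis
    unfolding dir_proc_def split_beta' by (rule measurable_compose) simp
qed

lemma norm_dirvec: "norm (dirvec i) = 1"
  by (simp add: dirvec_def norm_Pair)

lemma set_integrable_dir_proc: "set_integrable lborel {0..t} (dir_proc j \<tau> b)"
proof -
  have meas: "dir_proc j \<tau> b \<in> borel_measurable lborel"
    using measurable_Pair2[OF measurable_dir_proc, of "(j, \<lambda>k. (\<tau> k, b k))"]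
    by (simp add: space_input_space)
  show ?thesis
    unfolding set_integrable_def
    by (intro integrableI_bounded_set_indicator[where B = 1, OF _ meas])
      (simp_all add: dir_proc_def norm_dirvec emeasure_lborel_Icc_eq)
qed

lemma measurable_integral_dir_proc:
  "(\<lambda>x. integral {0..t} (dir_proc (fst x) (\<lambda>k. fst (snd x k)) (\<lambda>k. snd (snd x k))))
     \<in> borel_measurable input_space"
proof -
  let ?d = "\<lambda>x. dir_proc (fst x) (\<lambda>k. fst (snd x k)) (\<lambda>k. snd (snd x k))"
  have "(\<lambda>x. integral {0..t} (?d x)) = (\<lambda>x. \<integral>s. indicator {0..t} s *\<^sub>R ?d x s \<partial>lborel)"
    using set_integrable_dir_proc
    by (simp add: fun_eq_iff set_borel_integral_eq_integral(2)[symmetric] set_lebesgue_integral_def)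
  moreover have "(\<lambda>(x, s). indicator {0..t} s *\<^sub>R ?d x s) \<in> borel_measurable (input_space \<Otimes>\<^sub>M lborel)"
    using measurable_dir_proc unfolding split_beta' by measurable
  ultimately show ?thesis
    using lborel.borel_measurable_lebesgue_integral by simp
qed

lemma event_time_mono: "(\<And>k. 0 \<le> \<tau> k) \<Longrightarrow> n \<le> m \<Longrightarrow> event_time \<tau> n \<le> event_time \<tau> m"
  unfolding event_time_def by (rule sum_mono2) auto

lemma count_proc_eq:
  assumes nonneg: "\<And>k. 0 \<le> \<tau> k" and m: "event_time \<tau> m \<le> s" "s < event_time \<tau> (Suc m)"
  shows "count_proc \<tau> s = m"
proof -
  have le_s_iff: "event_time \<tau> n \<le> s \<longleftrightarrow> n \<le> m" for n
  proof
    assume "event_time \<tau> n \<le> s"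
    show "n \<le> m"
    proof (rule ccontr)
      assume "\<not> n \<le> m"
      then have "event_time \<tau> (Suc m) \<le> event_time \<tau> n"
        using nonneg by (intro event_time_mono) auto
      with m \<open>event_time \<tau> n \<le> s\<close> show False by linarith
    qed
  next
    assume "n \<le> m"
    then have "event_time \<tau> n \<le> event_time \<tau> m"
      using nonneg by (intro event_time_mono) auto
    with m(1) show "event_time \<tau> n \<le> s"
      by linarith
  qed
  have "{n. 1 \<le> n \<and> event_time \<tau> n \<le> s} = {1..m}"
    by (auto simp: le_s_iff)
  then show ?thesis
    by (simp add: count_proc_def)
qed

lemma ex_event_interval:
  assumes "0 \<le> s" "s < event_time \<tau> (Suc N)"
  shows "\<exists>m\<le>N. event_time \<tau> m \<le> s \<and> s < event_time \<tau> (Suc m)"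
  using assms(2)
proof (induction N)
  case 0
  then show ?case using assms(1) by (auto simp: event_time_def)
next
  case (Suc N)
  show ?case
  proof (cases "s < event_time \<tau> (Suc N)")
    case True
    with Suc.IH show ?thesis by (meson le_SucI)
  next
    case False
    then show ?thesis using Suc.prems by (intro exI[of _ "Suc N"]) auto
  qed
qed

lemma integral_less_of_le_one:
  fixes g :: "real \<Rightarrow> real"
  assumes g: "g integrable_on {0..t}" and le_one: "\<And>s. s \<in> {0..t} \<Longrightarrow> g s \<le> 1"
    and ab: "{a..b} \<subseteq> {0..t}" "a < b" and nonpos: "\<And>s. s \<in> {a..b} \<Longrightarrow> g s \<le> 0"
  shows "integral {0..t} g < t"
proof -
  have h: "(\<lambda>s. 1 - g s) integrable_on {0..t}"
    using g by (intro integrable_diff) auto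
  have "b - a = integral {a..b} (\<lambda>s. 1::real)"
    using ab by simp
  also have "\<dots> \<le> integral {a..b} (\<lambda>s. 1 - g s)"
    using integrable_on_subinterval[OF h ab(1)] nonpos by (intro integral_le) auto
  also have "\<dots> \<le> integral {0..t} (\<lambda>s. 1 - g s)"
    using h le_one by (intro integral_subset_le[OF ab(1) integrable_on_subinterval[OF h ab(1)]]) auto
  also have "\<dots> = t - integral {0..t} g"
    using g ab by (subst integral_diff) auto
  finally show ?thesis
    using ab by simp
qed

definition diagonal_rate :: "nat \<Rightarrow> (nat \<Rightarrow> real) \<Rightarrow> (nat \<Rightarrow> bool) \<Rightarrow> real \<Rightarrow> real" where
  "diagonal_rate j \<tau> b s = (if dir_index j b (count_proc \<tau> s) < 2 then 1 else -1)"

lemma has_integral_diagonal_rate: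
  "(diagonal_rate j \<tau> b has_integral
      fst (integral {0..t} (dir_proc j \<tau> b)) + snd (integral {0..t} (dir_proc j \<tau> b))) {0..t}"
proof -
  have linear: "bounded_linear (\<lambda>v::real \<times> real. fst v + snd v)"
    by (intro bounded_linear_add bounded_linear_fst bounded_linear_snd)
  have "dir_proc j \<tau> b integrable_on {0..t}"
    using set_integrable_dir_proc by (rule set_borel_integral_eq_integral(1))
  from has_integral_linear[OF integrable_integral[OF this] linear]
  show ?thesis
    using dir_index_less_4
    by (simp add: o_def dir_proc_def dirvec_fst_plus_snd diagonal_rate_def[abs_def])
qed

lemma diagonal_rate_eq:
  "(\<And>k. 0 \<le> \<tau> k) \<Longrightarrow> event_time \<tau> m \<le> s \<Longrightarrow> s < event_time \<tau> (Suc m)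
     \<Longrightarrow> diagonal_rate j \<tau> b s = (if dir_index j b m < 2 then 1 else -1)"
  by (simp add: diagonal_rate_def count_proc_eq)

lemma integral_diagonal_rate_eq:
  assumes nonneg: "\<And>k. 0 \<le> \<tau> k" and t: "0 \<le> t" "t \<le> event_time \<tau> (Suc N)"
    and good: "\<forall>m\<le>N. dir_index j b m < 2"
  shows "integral {0..t} (diagonal_rate j \<tau> b) = t"
proof -
  have "diagonal_rate j \<tau> b s = 1" if "s \<in> {0..t} - {t}" for s
  proof -
    from that t obtain m where "m \<le> N" "event_time \<tau> m \<le> s" "s < event_time \<tau> (Suc m)"
      using ex_event_interval[of s \<tau> N] by auto
    with good show ?thesis
      by (simp add: diagonal_rate_eq nonneg)
  qed
  then have "integral {0..t} (diagonal_rate j \<tau> b) = integral {0..t} (\<lambda>_. 1::real)"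
    by (rule integral_spike[OF negligible_sing, symmetric])
  with t show ?thesis
    by simp
qed

lemma integral_diagonal_rate_less:
  assumes pos: "\<And>k. 0 < \<tau> k" and N: "event_time \<tau> N < t"
    and m: "m \<le> N" "\<not> dir_index j b m < 2"
  shows "integral {0..t} (diagonal_rate j \<tau> b) < t"
proof -
  have nonneg: "0 \<le> \<tau> k" for k
    using pos less_imp_le by blast
  define a where "a = event_time \<tau> m"
  define c where "c = min (event_time \<tau> (Suc m)) t"
  have "0 \<le> a" "a \<le> event_time \<tau> N"
    unfolding a_def event_time_def using nonneg m(1) by (auto intro: sum_nonneg sum_mono2)
  moreover have "event_time \<tau> (Suc m) = a + \<tau> m"
    by (simp add: a_def event_time_def)
  ultimately have ac: "0 \<le> a" "a < c" "c \<le> t"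
    using pos[of m] N by (auto simp: c_def)
  show ?thesis
  proof (rule integral_less_of_le_one[where a = a and b = "(a + c) / 2"])
    show "diagonal_rate j \<tau> b integrable_on {0..t}"
      using has_integral_diagonal_rate by blast
    show "diagonal_rate j \<tau> b s \<le> 1" for s
      by (simp add: diagonal_rate_def)
    show "{a..(a + c) / 2} \<subseteq> {0..t}" "a < (a + c) / 2"
      using ac by auto
    show "diagonal_rate j \<tau> b s \<le> 0" if "s \<in> {a..(a + c) / 2}" for s
    proof -
      have "a \<le> s" "s < c"
        using that ac by auto
      then have "event_time \<tau> m \<le> s" "s < event_time \<tau> (Suc m)"
        by (auto simp: a_def c_def)
      with m(2) show ?thesis
        by (simp add: diagonal_rate_eq nonneg)
    qed
  qed
qed

lemma fst_plus_snd_integral_dir_proc_eq_iff: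
  assumes pos: "\<And>k. 0 < \<tau> k" and N: "event_time \<tau> N < t" "t \<le> event_time \<tau> (Suc N)"
  shows "fst (integral {0..t} (dir_proc j \<tau> b)) + snd (integral {0..t} (dir_proc j \<tau> b)) = t
    \<longleftrightarrow> (\<forall>m\<le>N. dir_index j b m < 2)"
proof -
  have nonneg: "0 \<le> \<tau> k" for k
    using pos less_imp_le by blast
  then have "0 \<le> event_time \<tau> N"
    unfolding event_time_def by (simp add: sum_nonneg)
  with N have t: "0 \<le> t"
    by linarith
  have sum_eq: "fst (integral {0..t} (dir_proc j \<tau> b)) + snd (integral {0..t} (dir_proc j \<tau> b))
      = integral {0..t} (diagonal_rate j \<tau> b)"
    using has_integral_diagonal_rate by (rule integral_unique[symmetric])
  show ?thesis
  proof
    assume "fst (integral {0..t} (dir_proc j \<tau> b)) + snd (integral {0..t} (dir_proc j \<tau> b)) = t"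
    then show "\<forall>m\<le>N. dir_index j b m < 2"
      using integral_diagonal_rate_less[OF pos N(1)] sum_eq by (metis order.irrefl)
  next
    assume "\<forall>m\<le>N. dir_index j b m < 2"
    then show "fst (integral {0..t} (dir_proc j \<tau> b)) + snd (integral {0..t} (dir_proc j \<tau> b)) = t"
      using integral_diagonal_rate_eq[OF nonneg t N(2)] sum_eq by simp
  qed
qed

definition diagonal_event :: "real \<Rightarrow> real \<Rightarrow> (nat \<times> (nat \<Rightarrow> real \<times> bool)) set" where
  "diagonal_event c t =
     {x. fst (position c (fst x) (\<lambda>k. fst (snd x k)) (\<lambda>k. snd (snd x k)) t)
       + snd (position c (fst x) (\<lambda>k. fst (snd x k)) (\<lambda>k. snd (snd x k)) t) = c * t}"

lemma diagonal_event_sets: "diagonal_event c t \<in> sets input_space"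
proof -
  let ?I = "\<lambda>x. integral {0..t} (dir_proc (fst x) (\<lambda>k. fst (snd x k)) (\<lambda>k. snd (snd x k)))"
  have I: "?I \<in> borel_measurable input_space"
    by (rule measurable_integral_dir_proc)
  have "fst \<in> borel_measurable (borel :: (real \<times> real) measure)"
    "snd \<in> borel_measurable (borel :: (real \<times> real) measure)"
    by (intro borel_measurable_continuous_onI continuous_on_fst continuous_on_snd continuous_on_id)+
  then have "(\<lambda>x. fst (?I x)) \<in> borel_measurable input_space"
    "(\<lambda>x. snd (?I x)) \<in> borel_measurable input_space"
    by (auto intro: measurable_compose[OF I])
  then have "(\<lambda>x. c * fst (?I x) + c * snd (?I x)) \<in> borel_measurable input_space"
    by (intro borel_measurable_add borel_measurable_times borel_measurable_const)
  then have "{x \<in> space input_space. c * fst (?I x) + c * snd (?I x) = c * t} \<in> sets input_space"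
    by (rule borel_measurable_eq) simp
  moreover have "diagonal_event c t = {x \<in> space input_space. c * fst (?I x) + c * snd (?I x) = c * t}"
    by (simp add: diagonal_event_def position_def space_input_space)
  ultimately show ?thesis by simp
qed

lemma diagonal_event_iff:
  assumes c: "0 < c" and pos: "\<And>k. 0 < fst (w k)" and N: "w \<in> marked_arrivals (\<lambda>_. True) N t"
  shows "(j, w) \<in> diagonal_event c t \<longleftrightarrow> j mod 4 < 2 \<and> w \<in> marked_arrivals (\<lambda>b. b) N t"
proof -
  let ?I = "integral {0..t} (dir_proc j (\<lambda>k. fst (w k)) (\<lambda>k. snd (w k)))"
  have "(j, w) \<in> diagonal_event c t \<longleftrightarrow> fst ?I + snd ?I = t"
    using c by (simp add: diagonal_event_def position_def distrib_left[symmetric])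
  also have "\<dots> \<longleftrightarrow> (\<forall>m\<le>N. dir_index j (\<lambda>k. snd (w k)) m < 2)"
    using N by (intro fst_plus_snd_integral_dir_proc_eq_iff pos) (auto simp: marked_arrivals_def)
  also have "\<dots> \<longleftrightarrow> j mod 4 < 2 \<and> w \<in> marked_arrivals (\<lambda>b. b) N t"
    using N by (simp add: dir_index_less_2_iff marked_arrivals_def)
  finally show ?thesis .
qed

lemma sets_input_law: "sets (input_law lam p) = sets input_space"
  unfolding input_law_def input_space_def
  by (intro sets_pair_measure_cong sets_PiM_cong refl) simp_all

lemma AE_input_law_diagonal_event:
  assumes lam: "0 < lam" and c: "0 < c" and t: "0 < t"
  shows "AE x in input_law lam p.
           x \<in> diagonal_event c t \<longleftrightarrow> x \<in> {j. j mod 4 < 2} \<times> (\<Union>n. marked_arrivals (\<lambda>b. b) n t)"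
proof -
  interpret marked_poisson_process lam "bernoulli_pmf p"
    using lam by unfold_locales
  let ?J = "measure_pmf (pmf_of_set {0..<4::nat})"
  interpret J_arrivals: pair_sigma_finite ?J arrivals.S
    by (intro pair_sigma_finite.intro prob_space_imp_sigma_finite prob_space_measure_pmf
        arrivals.P.prob_space_axioms)
  have law: "input_law lam p = ?J \<Otimes>\<^sub>M arrivals.S"
    by (simp add: input_law_def)
  have [measurable]: "diagonal_event c t \<in> sets (?J \<Otimes>\<^sub>M arrivals.S)"
    using diagonal_event_sets sets_input_law law by metis
  have [measurable]: "{j. j mod 4 < 2} \<times> (\<Union>n. marked_arrivals (\<lambda>b. b) n t) \<in> sets (?J \<Otimes>\<^sub>M arrivals.S)"
    by (intro pair_measureI) auto
  show ?thesis
    unfolding law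
  proof (rule J_arrivals.AE_pair_measure)
    show "AE j in ?J. AE w in arrivals.S.
        (j, w) \<in> diagonal_event c t \<longleftrightarrow> (j, w) \<in> {j. j mod 4 < 2} \<times> (\<Union>n. marked_arrivals (\<lambda>b. b) n t)"
    proof (rule AE_I2)
      fix j :: nat
      show "AE w in arrivals.S. (j, w) \<in> diagonal_event c t
          \<longleftrightarrow> (j, w) \<in> {j. j mod 4 < 2} \<times> (\<Union>n. marked_arrivals (\<lambda>b. b) n t)"
        using AE_interarrival_pos AE_marked_arrivals_True[OF t]
      proof eventually_elim
        case (elim w)
        then obtain N where pos: "\<And>k. 0 < fst (w k)" and N: "w \<in> marked_arrivals (\<lambda>_. True) N t"
          by blast
        have "(\<exists>n. w \<in> marked_arrivals (\<lambda>b. b) n t) \<longleftrightarrow> w \<in> marked_arrivals (\<lambda>b. b) N t"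
          by (auto dest: marked_arrivals_unique[OF N])
        then show ?case
          using diagonal_event_iff[OF c pos N] by simp
      qed
    qed
  qed measurable
qed

lemma measure_input_law_marked_arrivals:
  assumes lam: "0 < lam" and p: "0 \<le> p" "p \<le> 1" and t: "0 < t"
  shows "measure (input_law lam p) ({j. j mod 4 < 2} \<times> (\<Union>n. marked_arrivals (\<lambda>b. b) n t))
           = 1 / 2 * exp (- lam * t * (1 - p))"
proof -
  interpret marked_poisson_process lam "bernoulli_pmf p"
    using lam by unfold_locales
  let ?J = "measure_pmf (pmf_of_set {0..<4::nat})"
  have "{0..<4::nat} \<inter> {j. j mod 4 < 2} = {0, 1}"
    by auto
  then have "emeasure ?J {j. j mod 4 < 2} = ennreal (1 / 2)"
    by (simp add: measure_pmf.emeasure_eq_measure measure_pmf_of_set)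
  moreover have "{b. b} = {True}"
    by auto
  with p have "measure_pmf.prob (bernoulli_pmf p) {b. b} = p"
    by (simp add: measure_pmf_single)
  then have "emeasure arrivals.S (\<Union>n. marked_arrivals (\<lambda>b. b) n t) = ennreal (exp (- lam * t * (1 - p)))"
    using emeasure_UN_marked_arrivals[OF t, of "\<lambda>b. b"] by simp
  moreover have "(\<Union>n. marked_arrivals (\<lambda>b. b) n t) \<in> sets arrivals.S"
    by measurable
  ultimately have "emeasure (input_law lam p) ({j. j mod 4 < 2} \<times> (\<Union>n. marked_arrivals (\<lambda>b. b) n t))
      = ennreal (1 / 2) * ennreal (exp (- lam * t * (1 - p)))"
    by (simp add: input_law_def arrivals.P.emeasure_pair_measure_Times)
  then have "emeasure (input_law lam p) ({j. j mod 4 < 2} \<times> (\<Union>n. marked_arrivals (\<lambda>b. b) n t))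
      = ennreal (1 / 2 * exp (- lam * t * (1 - p)))"
    by (subst ennreal_mult) auto
  then show ?thesis
    by (simp add: measure_def)
qed

lemma measure_input_law_diagonal_event:
  assumes "0 < lam" "0 < c" "0 \<le> p" "p \<le> 1" "0 < t"
  shows "measure (input_law lam p) (diagonal_event c t) = 1 / 2 * exp (- lam * t * (1 - p))"
proof -
  interpret marked_poisson_process lam "bernoulli_pmf p"
    using assms(1) by unfold_locales
  have "(\<Union>n. marked_arrivals (\<lambda>b. b) n t) \<in> sets arrivals.S"
    by measurable
  then have "{j. j mod 4 < 2} \<times> (\<Union>n. marked_arrivals (\<lambda>b. b) n t) \<in> sets (input_law lam p)"
    by (simp add: input_law_def pair_measureI)
  moreover have "diagonal_event c t \<in> sets (input_law lam p)"
    using diagonal_event_sets by (simp add: sets_input_law)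
  ultimately have "measure (input_law lam p) (diagonal_event c t)
      = measure (input_law lam p) ({j. j mod 4 < 2} \<times> (\<Union>n. marked_arrivals (\<lambda>b. b) n t))"
    using AE_input_law_diagonal_event[OF assms(1,2,5), where p = p] by (intro measure_eq_AE)
  also have "\<dots> = 1 / 2 * exp (- lam * t * (1 - p))"
    using assms by (simp add: measure_input_law_marked_arrivals)
  finally show ?thesis .
qed

theorem mainTheorem4:
  fixes M :: "'a measure"
    and J0 :: "'a \<Rightarrow> nat" and T :: "nat \<Rightarrow> 'a \<Rightarrow> real" and B :: "nat \<Rightarrow> 'a \<Rightarrow> bool"
    and lam c p t :: real
  assumes "prob_space M"
    and "lam > 0" and "c > 0" and "0 < p" and "p < 1"
    and "(\<lambda>\<omega>. (J0 \<omega>, \<lambda>k. (T k \<omega>, B k \<omega>))) \<in> M \<rightarrow>\<^sub>M input_space"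
    and "distr M input_space (\<lambda>\<omega>. (J0 \<omega>, \<lambda>k. (T k \<omega>, B k \<omega>))) = input_law lam p"
    and "t > 0"
  shows "measure M {\<omega> \<in> space M.
            fst (position c (J0 \<omega>) (\<lambda>k. T k \<omega>) (\<lambda>k. B k \<omega>) t)
          + snd (position c (J0 \<omega>) (\<lambda>k. T k \<omega>) (\<lambda>k. B k \<omega>) t) = c * t}
         = 1 / 2 * exp (- lam * t * (1 - p))"
proof -
  let ?input = "\<lambda>\<omega>. (J0 \<omega>, \<lambda>k. (T k \<omega>, B k \<omega>))"
  have "{\<omega> \<in> space M. fst (position c (J0 \<omega>) (\<lambda>k. T k \<omega>) (\<lambda>k. B k \<omega>) t)
          + snd (position c (J0 \<omega>) (\<lambda>k. T k \<omega>) (\<lambda>k. B k \<omega>) t) = c * t}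
      = ?input -` diagonal_event c t \<inter> space M"
    by (auto simp: diagonal_event_def)
  also have "measure M \<dots> = measure (distr M input_space ?input) (diagonal_event c t)"
    using measure_distr[OF assms(6) diagonal_event_sets] by simp
  also have "\<dots> = 1 / 2 * exp (- lam * t * (1 - p))"
    using assms by (simp add: measure_input_law_diagonal_event)
  finally show ?thesis .
qed

end
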